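(* Let $N\ge2$ and let $X_1,\dots,X_N$ be non-negative random variables. Suppose there are constants $\Theta_1>0$, $\Theta_2>0$ such that $\mathbb E[X_i^p]\le p^p\Theta_1^p+\Theta_2^p$ for all integers $p\ge1$ and all $i\in\{1,\dots,N\}$. Then for any $p\ge1$, $$\mathbb E\max_{i\in\{1,\dots,N\}}X_i^p\le\big(p^p+\log(N)^p+\Theta_2^p\Theta_1^{-p}\big)(24e\Theta_1)^p.$$ *)

theory Defs
  imports "HOL-Probability.Probability"
begin

end

theory Submission
  imports Defs
begin

text \<open>
  For an integer \<open>q \<ge> p\<close> and any level \<open>C > 0\<close> one has \<open>x^p \<le> C^p + C^(p-q) x^q\<close>.
  Bounding the maximum of the \<open>X i ^ q\<close> by their sum gives
  \<open>E max X i ^ p \<le> C^p + C^(p-q) N B\<close> whenever all \<open>q\<close>-th moments are at most \<open>B\<close>,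
  and \<open>C = (N B)^(1/q)\<close> turns this into \<open>2 (N B)^(p/q)\<close>. With \<open>q = \<lceil>max p (ln N)\<rceil>\<close>
  one has \<open>N^(1/q) \<le> e\<close> and \<open>B^(1/q) \<le> q \<Theta>\<^sub>1 + \<Theta>\<^sub>2\<close>, which is linear in \<open>p + ln N\<close>.
\<close>

lemma sum_of_powers_le_power_of_sum:
  fixes a b :: real
  assumes "a \<ge> 0" "b \<ge> 0" "n \<ge> 1"
  shows "a ^ n + b ^ n \<le> (a + b) ^ n"
  using assms(3)
proof (induction n rule: dec_induct)
  case base
  then show ?case by simp
next
  case (step n)
  have "a ^ Suc n + b ^ Suc n \<le> (a + b) * (a ^ n + b ^ n)"
    using assms by (simp add: algebra_simps)
  also have "\<dots> \<le> (a + b) * (a + b) ^ n"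
    using step.IH assms by (intro mult_left_mono) auto
  finally show ?case by simp
qed

lemma powr_add3_le:
  fixes a b c p :: real
  assumes "a \<ge> 0" "b \<ge> 0" "c \<ge> 0" "p \<ge> 0"
  shows "(a + b + c) powr p \<le> 3 powr p * (a powr p + b powr p + c powr p)"
proof -
  define m where "m = max a (max b c)"
  have "(a + b + c) powr p \<le> (3 * m) powr p"
    using assms by (intro powr_mono2) (auto simp: m_def)
  also have "\<dots> = 3 powr p * m powr p"
    using assms by (simp add: m_def powr_mult)
  also have "m powr p \<le> a powr p + b powr p + c powr p"
    by (simp add: m_def max_def add_increasing add_increasing2)
  finally show ?thesis by simp
qed

lemma powr_le_powr_plus_power:
  fixes x C p :: real and q :: nat
  assumes "x \<ge> 0" "C > 0" "0 \<le> p" "p \<le> real q"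
  shows "x powr p \<le> C powr p + C powr (p - q) * x ^ q"
proof (cases "x \<le> C")
  case True
  then have "x powr p \<le> C powr p"
    using assms by (intro powr_mono2) auto
  then show ?thesis using assms by (simp add: add_increasing2)
next
  case False
  then have "x > 0" "x / C \<ge> 1" using assms by auto
  have "x powr p = C powr p * (x / C) powr p"
    using assms \<open>x > 0\<close> by (simp add: powr_divide)
  also have "\<dots> \<le> C powr p * (x / C) powr q"
    using \<open>x / C \<ge> 1\<close> assms by (intro mult_left_mono powr_mono) auto
  also have "\<dots> = C powr (p - q) * x ^ q"
    using assms \<open>x > 0\<close> by (simp add: powr_divide powr_diff powr_realpow)
  finally show ?thesis by (simp add: add_increasing)
qed

lemma Max_powr_le_powr_plus_sum_power:
  fixes f :: "'i \<Rightarrow> real" and C p :: real and q :: nat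
  assumes "finite I" "I \<noteq> {}" "\<And>i. i \<in> I \<Longrightarrow> f i \<ge> 0"
    and "C > 0" "0 \<le> p" "p \<le> real q"
  shows "(MAX i\<in>I. f i powr p) \<le> C powr p + C powr (p - q) * (\<Sum>i\<in>I. f i ^ q)"
proof -
  have "(MAX i\<in>I. f i powr p) \<in> (\<lambda>i. f i powr p) ` I"
    using assms(1,2) by (intro Max_in) auto
  then obtain j where j: "j \<in> I" "(MAX i\<in>I. f i powr p) = f j powr p"
    by auto
  have "f j powr p \<le> C powr p + C powr (p - q) * f j ^ q"
    using j assms by (intro powr_le_powr_plus_power) auto
  also have "f j ^ q \<le> (\<Sum>i\<in>I. f i ^ q)"
    using j assms by (intro member_le_sum) auto
  finally show ?thesis
    using j by (simp add: mult_left_mono)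
qed

lemma (in prob_space) nn_integral_Max_powr_le_moment:
  fixes X :: "'i \<Rightarrow> 'a \<Rightarrow> real" and p B :: real and q :: nat
  assumes "finite I" "I \<noteq> {}"
    and "\<And>i. i \<in> I \<Longrightarrow> X i \<in> borel_measurable M"
    and "\<And>i \<omega>. i \<in> I \<Longrightarrow> \<omega> \<in> space M \<Longrightarrow> X i \<omega> \<ge> 0"
    and "\<And>i. i \<in> I \<Longrightarrow> (\<integral>\<^sup>+ \<omega>. ennreal (X i \<omega> ^ q) \<partial>M) \<le> ennreal B"
    and "0 < p" "p \<le> real q" "B > 0"
  shows "(\<integral>\<^sup>+ \<omega>. ennreal (MAX i\<in>I. X i \<omega> powr p) \<partial>M)
           \<le> ennreal (2 * (card I * B) powr (p / q))"
proof -
  define C where "C = (card I * B) powr (1 / q)"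
  have "q > 0" using assms(6,7) by linarith
  have "card I > 0" using assms(1,2) by (simp add: card_gt_0_iff)
  then have "C > 0" using assms(8) by (simp add: C_def)
  have C_powr_q: "C powr q = card I * B"
    using \<open>q > 0\<close> \<open>card I > 0\<close> assms(8) by (simp add: C_def powr_powr)
  have C_powr_p: "C powr p = (card I * B) powr (p / q)"
    using \<open>card I > 0\<close> assms(8) by (simp add: C_def powr_powr)
  let ?S = "\<lambda>\<omega>. \<Sum>i\<in>I. ennreal (X i \<omega> ^ q)"
  have "(\<integral>\<^sup>+ \<omega>. ennreal (MAX i\<in>I. X i \<omega> powr p) \<partial>M)
      \<le> (\<integral>\<^sup>+ \<omega>. ennreal (C powr p) + ennreal (C powr (p - q)) * ?S \<omega> \<partial>M)"
  proof (intro nn_integral_mono)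
    fix \<omega> assume "\<omega> \<in> space M"
    then have X_nonneg: "\<And>i. i \<in> I \<Longrightarrow> X i \<omega> \<ge> 0"
      using assms(4) by blast
    then have "ennreal (MAX i\<in>I. X i \<omega> powr p)
        \<le> ennreal (C powr p + C powr (p - q) * (\<Sum>i\<in>I. X i \<omega> ^ q))"
      using assms \<open>C > 0\<close> by (intro ennreal_leI Max_powr_le_powr_plus_sum_power) auto
    also have "\<dots> = ennreal (C powr p) + ennreal (C powr (p - q)) * ?S \<omega>"
      using X_nonneg by (simp add: ennreal_plus ennreal_mult sum_nonneg sum_ennreal)
    finally show "ennreal (MAX i\<in>I. X i \<omega> powr p)
        \<le> ennreal (C powr p) + ennreal (C powr (p - q)) * ?S \<omega>" .
  qed
  also have "\<dots> = ennreal (C powr p)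
      + ennreal (C powr (p - q)) * (\<Sum>i\<in>I. \<integral>\<^sup>+ \<omega>. ennreal (X i \<omega> ^ q) \<partial>M)"
    using assms(3) by (simp add: nn_integral_add nn_integral_cmult nn_integral_sum emeasure_space_1)
  also have "\<dots> \<le> ennreal (C powr p) + ennreal (C powr (p - q)) * (\<Sum>i\<in>I. ennreal B)"
    using assms(5) by (intro add_left_mono mult_left_mono sum_mono) auto
  also have "\<dots> = ennreal (C powr p + C powr (p - q) * C powr q)"
    using assms(8) by (simp add: C_powr_q ennreal_plus ennreal_mult ennreal_of_nat_eq_real_of_nat)
  also have "\<dots> = ennreal (2 * (card I * B) powr (p / q))"
    by (simp add: powr_add[symmetric] C_powr_p)
  finally show ?thesis .
qed

lemma moment_sum_powr_le_exp_powr: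
  fixes N T1 T2 p :: real and q :: nat
  assumes "T1 > 0" "T2 > 0" "0 \<le> N" "N \<le> exp q" "q \<ge> 1" "p \<ge> 0"
  shows "(N * (real q ^ q * T1 ^ q + T2 ^ q)) powr (p / q) \<le> (exp 1 * (q * T1 + T2)) powr p"
proof -
  define B where "B = exp 1 * (q * T1 + T2)"
  have "B > 0" using assms(1,2) by (simp add: B_def add_nonneg_pos)
  have "real q ^ q * T1 ^ q + T2 ^ q \<le> (q * T1 + T2) ^ q"
    unfolding power_mult_distrib[symmetric] using assms by (intro sum_of_powers_le_power_of_sum) auto
  then have "N * (real q ^ q * T1 ^ q + T2 ^ q) \<le> exp q * (q * T1 + T2) ^ q"
    using assms by (intro mult_mono) auto
  also have "\<dots> = B powr q"
    using \<open>B > 0\<close> by (simp add: B_def powr_realpow power_mult_distrib exp_of_nat_mult[symmetric])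
  finally have "(N * (real q ^ q * T1 ^ q + T2 ^ q)) powr (p / q) \<le> (B powr q) powr (p / q)"
    using assms by (intro powr_mono2) auto
  also have "\<dots> = B powr p"
    using assms(5) by (simp add: powr_powr)
  finally show ?thesis unfolding B_def .
qed

lemma double_level_powr_le_sum_powr:
  fixes T1 T2 p L :: real and q :: nat
  assumes "T1 > 0" "T2 \<ge> 0" "p \<ge> 1" "L \<ge> 0" "real q \<le> max p L + 1"
  shows "2 * (exp 1 * (q * T1 + T2)) powr p
           \<le> (p powr p + L powr p + T2 powr p * T1 powr (-p)) * (24 * exp 1 * T1) powr p"
proof -
  define S where "S = (p * T1) powr p + (L * T1) powr p + T2 powr p"
  have "real q * T1 \<le> (2 * p + 2 * L) * T1"
    using assms by (intro mult_right_mono) auto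
  then have "exp 1 * (q * T1 + T2) \<le> exp 1 * (2 * (p * T1 + L * T1 + T2))"
    using assms by (intro mult_left_mono) (auto simp: algebra_simps)
  then have "(exp 1 * (q * T1 + T2)) powr p \<le> (2 * exp 1 * (p * T1 + L * T1 + T2)) powr p"
    using assms by (intro powr_mono2) (auto simp: algebra_simps)
  also have "\<dots> = (2 * exp 1) powr p * (p * T1 + L * T1 + T2) powr p"
    using assms by (simp add: powr_mult)
  also have "\<dots> \<le> (2 * exp 1) powr p * (3 powr p * S)"
    unfolding S_def using assms by (intro mult_left_mono powr_add3_le) auto
  also have "\<dots> = (6 * exp 1) powr p * S"
    using powr_mult[of 2 3 p] by (simp add: powr_mult)
  finally have "(exp 1 * (q * T1 + T2)) powr p \<le> (6 * exp 1) powr p * S" .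
  moreover have "2 \<le> 4 powr p"
    using powr_mono[of 1 p 4] assms(3) by simp
  ultimately have "2 * (exp 1 * (q * T1 + T2)) powr p \<le> 4 powr p * ((6 * exp 1) powr p * S)"
    by (intro mult_mono) (auto simp: S_def)
  also have "\<dots> = (p powr p + L powr p + T2 powr p * T1 powr (-p)) * (24 * exp 1 * T1) powr p"
    using assms powr_mult[of 4 6 p] by (simp add: S_def powr_mult powr_minus field_simps)
  finally show ?thesis .
qed

theorem corollaryB3:
  fixes M :: "'a measure" and X :: "nat \<Rightarrow> 'a \<Rightarrow> real"
    and N :: nat and \<Theta>\<^sub>1 \<Theta>\<^sub>2 p :: real
  assumes "prob_space M"
    and "N \<ge> 2"
    and "\<And>i. i \<in> {1..N} \<Longrightarrow> X i \<in> borel_measurable M"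
    and "\<And>i \<omega>. i \<in> {1..N} \<Longrightarrow> \<omega> \<in> space M \<Longrightarrow> X i \<omega> \<ge> 0"
    and "\<Theta>\<^sub>1 > 0" and "\<Theta>\<^sub>2 > 0"
    and "\<And>i (q::nat). i \<in> {1..N} \<Longrightarrow> q \<ge> 1 \<Longrightarrow>
           (\<integral>\<^sup>+ \<omega>. ennreal (X i \<omega> ^ q) \<partial>M)
             \<le> ennreal (real q ^ q * \<Theta>\<^sub>1 ^ q + \<Theta>\<^sub>2 ^ q)"
    and "p \<ge> 1"
  shows "(\<integral>\<^sup>+ \<omega>. ennreal (MAX i\<in>{1..N}. X i \<omega> powr p) \<partial>M)
           \<le> ennreal ((p powr p + ln (real N) powr p + \<Theta>\<^sub>2 powr p * \<Theta>\<^sub>1 powr (-p))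
                      * (24 * exp 1 * \<Theta>\<^sub>1) powr p)"
proof -
  interpret prob_space M by fact
  define L where "L = ln (real N)"
  define q where "q = nat \<lceil>max p L\<rceil>"
  have "L \<ge> 0" using assms(2) by (simp add: L_def)
  have q: "p \<le> real q" "L \<le> real q" "real q \<le> max p L + 1"
    unfolding q_def using assms(8) by linarith+
  have "real N = exp L"
    using assms(2) by (simp add: L_def)
  also have "\<dots> \<le> exp q"
    using q(2) by simp
  finally have "real N \<le> exp q" .
  have "(\<integral>\<^sup>+ \<omega>. ennreal (MAX i\<in>{1..N}. X i \<omega> powr p) \<partial>M)
      \<le> ennreal (2 * (card {1..N} * (real q ^ q * \<Theta>\<^sub>1 ^ q + \<Theta>\<^sub>2 ^ q)) powr (p / q))"
    using assms q by (intro nn_integral_Max_powr_le_moment) (auto intro: add_nonneg_pos)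
  also have "\<dots> \<le> ennreal (2 * (exp 1 * (q * \<Theta>\<^sub>1 + \<Theta>\<^sub>2)) powr p)"
    using q \<open>real N \<le> exp q\<close> assms
    by (intro ennreal_leI mult_left_mono moment_sum_powr_le_exp_powr) auto
  also have "\<dots> \<le> ennreal ((p powr p + ln (real N) powr p + \<Theta>\<^sub>2 powr p * \<Theta>\<^sub>1 powr (-p))
                      * (24 * exp 1 * \<Theta>\<^sub>1) powr p)"
    using q \<open>L \<ge> 0\<close> assms unfolding L_def
    by (intro ennreal_leI double_level_powr_le_sum_powr) auto
  finally show ?thesis .
qed

end
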